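(* Let $K$ and $K'$ be two CMIs on $X_1,\dots,X_n$ (not necessarily in pure form). Then $K\sim K'$ if and only if $\mathrm{can}(\mathrm{pur}(K))=\mathrm{can}(\mathrm{pur}(K'))$.
   Context: Setting: $X_1,\dots,X_n$ are jointly distributed discrete random variables with $H(X_i)<\infty$ for all $i$; the joint distribution is otherwise unspecified. Write $\mathcal N_n=\{1,\dots,n\}$, $X_\alpha=(X_i,i\in\alpha)$, and $X_\emptyset$ is a constant. A CMI is a pair $K=(C,\langle Q_1,\dots,Q_k\rangle)$ with $k\ge0$, $C\subseteq\mathcal N_n$, $\langle Q_1,\dots,Q_k\rangle$ an unordered multiset of subsets of $\mathcal N_n$. For a given joint distribution, $K$ is valid if $\sum_{i=1}^k H(X_{Q_i}|X_C)-H(X_{Q_1},\dots,X_{Q_k}|X_C)=0$. Empty members may be deleted. Two CMIs are equal if conditioning sets and multisets coincide. $K\sim K'$ means that for every joint distribution both are valid or both invalid. Degenerate CMIs (valid for every distribution) are all identified and written $(\cdot,\langle\ \rangle)$. Pure form: $\mathrm{pur}(K)=(C,\langle Q_i\setminus C: Q_i\setminus C\ne\emptyset\rangle)$ (with multiplicity). A CMI is in pure form if all $Q_i\neq\emptyset$ and $Q_i\cap C=\emptyset$. Canonical form of a pure $K=(C,\langle Q_1,\dots,Q_k\rangle)$: if $k\ge2$, $\mathbb I_K$ is the set of indices lying in at least two members (distinct positions) of the collection; $\mathbb I_K=\emptyset$ if $k\le1$. Let $P_1,\dots,P_t$ be the nonempty sets among $Q_i\setminus\mathbb I_K$ (with multiplicity).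 Then $\mathrm{can}(K)=(\cdot,\langle\ \rangle)$ if $k\le1$; $(C,\langle\mathbb I_K,\mathbb I_K\rangle)$ if $k\ge2,\mathbb I_K\ne\emptyset,t\le1$; $(C,\langle P_1,\dots,P_t\rangle)$ if $k\ge2,\mathbb I_K=\emptyset$; $(C,\langle\mathbb I_K,\mathbb I_K,P_1,\dots,P_t\rangle)$ if $k\ge2,\mathbb I_K\ne\emptyset,t\ge2$. *)

theory Defs
  imports "HOL-Probability.Probability" "HOL-Library.Multiset"
begin

text \<open>A joint distribution of the discrete random variables X_1, X_2, ... is a
  probability mass function on outcomes \<omega> :: nat \<Rightarrow> nat, with X_i(\<omega>) = \<omega> i
  (every countable alphabet can be relabelled into nat).\<close>

type_synonym jdist = "(nat \<Rightarrow> nat) pmf"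

definition marg :: "jdist \<Rightarrow> nat set \<Rightarrow> (nat \<Rightarrow> nat) pmf" where
  "marg p \<alpha> = map_pmf (\<lambda>\<omega>. restrict \<omega> \<alpha>) p"

definition entropy_pmf :: "'a pmf \<Rightarrow> ennreal" where
  "entropy_pmf q = (\<integral>\<^sup>+ x. ennreal (- log 2 (pmf q x)) \<partial>measure_pmf q)"

definition H :: "jdist \<Rightarrow> nat set \<Rightarrow> real" where
  "H p \<alpha> = enn2real (entropy_pmf (marg p \<alpha>))"

definition condH :: "jdist \<Rightarrow> nat set \<Rightarrow> nat set \<Rightarrow> real" where
  "condH p A C = H p (A \<union> C) - H p C"

definition admissible :: "nat \<Rightarrow> jdist \<Rightarrow> bool" where
  "admissible n p \<longleftrightarrow> (\<forall>i \<in> {1..n}. entropy_pmf (marg p {i}) < \<infinity>)"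

text \<open>A CMI (C, <Q_1,...,Q_k>).\<close>
type_synonym cmi = "nat set \<times> nat set multiset"

definition is_cmi :: "nat \<Rightarrow> cmi \<Rightarrow> bool" where
  "is_cmi n K \<longleftrightarrow> fst K \<subseteq> {1..n} \<and> (\<forall>Q \<in># snd K. Q \<subseteq> {1..n})"

text \<open>Validity: sum_i H(X_{Q_i}|X_C) - H(X_{Q_1},...,X_{Q_k}|X_C) = 0.
  The joint variable (X_{Q_1},...,X_{Q_k}) carries the same information as X_{Q_1 \<union> ... \<union> Q_k}.\<close>
definition valid :: "jdist \<Rightarrow> cmi \<Rightarrow> bool" where
  "valid p K \<longleftrightarrow>
     (\<Sum>Q \<in># snd K. condH p Q (fst K)) - condH p (\<Union>(set_mset (snd K))) (fst K) = 0"

definition cmi_equiv :: "nat \<Rightarrow> cmi \<Rightarrow> cmi \<Rightarrow> bool" where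
  "cmi_equiv n K K' \<longleftrightarrow> (\<forall>p. admissible n p \<longrightarrow> (valid p K \<longleftrightarrow> valid p K'))"

definition pur :: "cmi \<Rightarrow> cmi" where
  "pur K = (fst K, filter_mset (\<lambda>Q. Q \<noteq> {}) (image_mset (\<lambda>Q. Q - fst K) (snd K)))"

definition II :: "nat set multiset \<Rightarrow> nat set" where
  "II Qs = {i. size (filter_mset (\<lambda>Q. i \<in> Q) Qs) \<ge> 2}"

text \<open>Canonical form; None represents the degenerate CMI (\<cdot>, < >).\<close>
definition can :: "cmi \<Rightarrow> cmi option" where
  "can K = (let C = fst K; Qs = snd K; I = (if size Qs \<le> 1 then {} else II Qs);
               Ps = filter_mset (\<lambda>P. P \<noteq> {}) (image_mset (\<lambda>Q. Q - I) Qs) in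
     if size Qs \<le> 1 then None
     else if I \<noteq> {} \<and> size Ps \<le> 1 then Some (C, {#I, I#})
     else if I = {} then Some (C, Ps)
     else Some (C, {#I, I#} + Ps))"

end

theory Submission
  imports Defs
begin

(* Validity of a CMI (C, M) only involves the function f A = H (X_A, X_C), which is monotone
   and submodular.  For such f the multivariate information of M vanishes iff every index
   lying in two members of M is f-null and the remaining parts P_j are independent; this is
   exactly the statement that the canonical form is valid, so K and can (pur K) are
   equivalent.  Conversely, canonical forms are told apart by the distributions in which one
   fair bit is copied onto the coordinates in D: (C, M) is valid for it iff D meets C or at
   most one member of M meets D, and these tests recover C, the doubled set I and the
   blocks P_j. *)

section \<open>Submodularity of entropy\<close>

definition atom_prob :: "jdist \<Rightarrow> nat set \<Rightarrow> (nat \<Rightarrow> nat) \<Rightarrow> real" where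
  "atom_prob p S \<omega> = measure_pmf.prob p {\<omega>'. restrict \<omega>' S = restrict \<omega> S}"

definition self_info :: "jdist \<Rightarrow> nat set \<Rightarrow> (nat \<Rightarrow> nat) \<Rightarrow> real" where
  "self_info p S \<omega> = - log 2 (atom_prob p S \<omega>)"

lemma pmf_marg_restrict: "pmf (marg p S) (restrict \<omega> S) = atom_prob p S \<omega>"
  unfolding marg_def atom_prob_def pmf_map by (simp add: vimage_def)

lemma atom_prob_pos: "\<omega> \<in> set_pmf p \<Longrightarrow> 0 < atom_prob p S \<omega>"
  unfolding atom_prob_def by (intro measure_pmf_posI) auto

lemma self_info_nonneg: "\<omega> \<in> set_pmf p \<Longrightarrow> 0 \<le> self_info p S \<omega>"
  using atom_prob_pos[of \<omega> p S] unfolding self_info_def atom_prob_def by simp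

lemma atom_prob_antimono: "A \<subseteq> B \<Longrightarrow> atom_prob p B \<omega> \<le> atom_prob p A \<omega>"
  unfolding atom_prob_def
  by (rule measure_pmf.finite_measure_mono) (auto simp: restrict_def fun_eq_iff split: if_splits)

lemma self_info_mono: "A \<subseteq> B \<Longrightarrow> \<omega> \<in> set_pmf p \<Longrightarrow> self_info p A \<omega> \<le> self_info p B \<omega>"
  unfolding self_info_def using atom_prob_antimono[of A B p \<omega>] atom_prob_pos[of \<omega> p B] by simp

lemma atom_prob_restrict: "S \<subseteq> T \<Longrightarrow> atom_prob p S (restrict \<omega> T) = atom_prob p S \<omega>"
  unfolding atom_prob_def by (simp add: Int_absorb1 Int_absorb2)

lemma entropy_marg_eq_nn_integral:
  "entropy_pmf (marg p S) = (\<integral>\<^sup>+\<omega>. ennreal (self_info p S \<omega>) \<partial>p)"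
  unfolding entropy_pmf_def self_info_def by (simp add: pmf_marg_restrict[symmetric]) (simp add: marg_def)

lemma H_eq_integral: "H p S = (\<integral>\<omega>. self_info p S \<omega> \<partial>p)"
  unfolding H_def entropy_marg_eq_nn_integral
  by (subst integral_eq_nn_integral) (auto simp: AE_measure_pmf_iff self_info_nonneg)

lemma entropy_marg_mono: "A \<subseteq> B \<Longrightarrow> entropy_pmf (marg p A) \<le> entropy_pmf (marg p B)"
  unfolding entropy_marg_eq_nn_integral
  by (intro nn_integral_mono_AE) (auto simp: AE_measure_pmf_iff intro!: ennreal_leI self_info_mono)

lemma entropy_marg_empty: "entropy_pmf (marg p {}) = 0"
  unfolding entropy_marg_eq_nn_integral self_info_def atom_prob_def by (simp add: restrict_def)

lemma integrable_self_info:
  "entropy_pmf (marg p S) < \<infinity> \<Longrightarrow> integrable (measure_pmf p) (self_info p S)"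
  by (rule integrableI_nonneg)
    (auto simp: AE_measure_pmf_iff self_info_nonneg entropy_marg_eq_nn_integral)

(* X_A and X_B coupled conditionally independently given X_{A \<inter> B}; that its total mass is 1
   is what bounds the mean of info_ratio below. *)
definition glue_pmf :: "jdist \<Rightarrow> nat set \<Rightarrow> nat set \<Rightarrow> (nat \<Rightarrow> nat) pmf" where
  "glue_pmf p A B = bind_pmf (marg p A) (\<lambda>x. map_pmf (\<lambda>y i. if i \<in> A then x i else y i)
      (cond_pmf (marg p B) {y. restrict y (A \<inter> B) = restrict x (A \<inter> B)}))"

lemma pmf_glue_pmf_ge:
  assumes "\<omega> \<in> set_pmf p"
  shows "atom_prob p A \<omega> * atom_prob p B \<omega> / atom_prob p (A \<inter> B) \<omega>
    \<le> pmf (glue_pmf p A B) (restrict \<omega> (A \<union> B))"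
proof -
  define x0 where "x0 = restrict \<omega> A"
  define y0 where "y0 = restrict \<omega> B"
  define S0 where "S0 = {y. restrict y (A \<inter> B) = restrict x0 (A \<inter> B)}"
  define F where "F = (\<lambda>x. map_pmf (\<lambda>y i. if i \<in> A then x i else y i)
      (cond_pmf (marg p B) {y. restrict y (A \<inter> B) = restrict x (A \<inter> B)}))"
  have y0: "y0 \<in> S0" "y0 \<in> set_pmf (marg p B)"
    unfolding S0_def y0_def x0_def marg_def using assms by (auto simp: fun_eq_iff)
  have "measure_pmf.prob (marg p B) S0 = atom_prob p (A \<inter> B) \<omega>"
    unfolding marg_def measure_map_pmf atom_prob_def S0_def x0_def
    by (simp add: vimage_def Int_absorb1 Int_absorb2)
  then have "atom_prob p B \<omega> / atom_prob p (A \<inter> B) \<omega> = pmf (cond_pmf (marg p B) S0) y0"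
    using pmf_cond[of "marg p B" S0 y0] y0 by (force simp: y0_def pmf_marg_restrict)
  also have "\<dots> = measure_pmf.prob (cond_pmf (marg p B) S0) {y0}"
    by (simp add: measure_pmf_single)
  also have "\<dots> \<le> pmf (F x0) (restrict \<omega> (A \<union> B))"
    unfolding F_def pmf_map S0_def[symmetric]
    by (intro measure_pmf.finite_measure_mono) (auto simp: x0_def y0_def fun_eq_iff)
  finally have F0: "atom_prob p B \<omega> / atom_prob p (A \<inter> B) \<omega> \<le> pmf (F x0) (restrict \<omega> (A \<union> B))" .
  have "ennreal (pmf (marg p A) x0 * pmf (F x0) (restrict \<omega> (A \<union> B)))
      \<le> (\<integral>\<^sup>+x. ennreal (pmf (marg p A) x) * ennreal (pmf (F x) (restrict \<omega> (A \<union> B))) \<partial>count_space UNIV)"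
    using nn_integral_ge_point[of x0 UNIV "\<lambda>x. ennreal (pmf (marg p A) x) * ennreal (pmf (F x) _)"]
    by (simp add: ennreal_mult')
  also have "\<dots> = pmf (glue_pmf p A B) (restrict \<omega> (A \<union> B))"
    unfolding glue_pmf_def ennreal_pmf_bind F_def[symmetric] by (simp add: nn_integral_measure_pmf)
  finally have "atom_prob p A \<omega> * pmf (F x0) (restrict \<omega> (A \<union> B))
      \<le> pmf (glue_pmf p A B) (restrict \<omega> (A \<union> B))"
    by (simp add: x0_def pmf_marg_restrict)
  moreover have "atom_prob p A \<omega> * (atom_prob p B \<omega> / atom_prob p (A \<inter> B) \<omega>)
      \<le> atom_prob p A \<omega> * pmf (F x0) (restrict \<omega> (A \<union> B))"
    using mult_left_mono[OF F0] atom_prob_pos[OF assms, of A] by simp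
  ultimately show ?thesis by simp
qed

definition info_ratio :: "jdist \<Rightarrow> nat set \<Rightarrow> nat set \<Rightarrow> (nat \<Rightarrow> nat) \<Rightarrow> real" where
  "info_ratio p A B \<omega> =
     atom_prob p A \<omega> * atom_prob p B \<omega> / (atom_prob p (A \<union> B) \<omega> * atom_prob p (A \<inter> B) \<omega>)"

lemma info_ratio_pos: "\<omega> \<in> set_pmf p \<Longrightarrow> 0 < info_ratio p A B \<omega>"
  unfolding info_ratio_def using atom_prob_pos[of \<omega> p] by simp

lemma info_ratio_restrict: "info_ratio p A B (restrict \<omega> (A \<union> B)) = info_ratio p A B \<omega>"
  unfolding info_ratio_def by (simp add: atom_prob_restrict Int_absorb1 Int_absorb2 le_supI1)

lemma nn_integral_info_ratio_le_1:
  "(\<integral>\<^sup>+\<omega>. ennreal (info_ratio p A B \<omega>) \<partial>measure_pmf p) \<le> 1"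
proof -
  have "(\<integral>\<^sup>+\<omega>. ennreal (info_ratio p A B \<omega>) \<partial>p)
      = (\<integral>\<^sup>+w. ennreal (pmf (marg p (A \<union> B)) w) * ennreal (info_ratio p A B w) \<partial>count_space UNIV)"
    by (simp add: info_ratio_restrict marg_def nn_integral_measure_pmf[symmetric])
  also have "\<dots> \<le> (\<integral>\<^sup>+w. ennreal (pmf (glue_pmf p A B) w) \<partial>count_space UNIV)"
  proof (intro nn_integral_mono)
    fix w
    show "ennreal (pmf (marg p (A \<union> B)) w) * ennreal (info_ratio p A B w)
        \<le> ennreal (pmf (glue_pmf p A B) w)"
    proof (cases "w \<in> set_pmf (marg p (A \<union> B))")
      case True
      then obtain \<omega> where \<omega>: "\<omega> \<in> set_pmf p" and w: "w = restrict \<omega> (A \<union> B)"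
        unfolding marg_def by auto
      have "pmf (marg p (A \<union> B)) w * info_ratio p A B w
          = atom_prob p A \<omega> * atom_prob p B \<omega> / atom_prob p (A \<inter> B) \<omega>"
        using atom_prob_pos[OF \<omega>, of "A \<union> B"]
        unfolding w pmf_marg_restrict info_ratio_restrict by (simp add: info_ratio_def)
      also have "\<dots> \<le> pmf (glue_pmf p A B) w"
        unfolding w by (rule pmf_glue_pmf_ge[OF \<omega>])
      finally show ?thesis
        using info_ratio_pos[OF \<omega>, of A B] by (simp add: ennreal_mult'[symmetric])
    next
      case False
      then show ?thesis by (simp add: set_pmf_iff)
    qed
  qed
  also have "\<dots> = 1"
    by (simp add: nn_integral_pmf)
  finally show ?thesis .
qed

(* The defect in pointwise submodularity is log 2 (info_ratio p A B \<omega>); ln x \<le> x - 1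
   bounds it by an integrand whose mean is at most 0. *)
lemma self_info_Un_Int_le:
  assumes "\<omega> \<in> set_pmf p"
  shows "self_info p (A \<union> B) \<omega> + self_info p (A \<inter> B) \<omega>
    \<le> self_info p A \<omega> + self_info p B \<omega> + (info_ratio p A B \<omega> - 1) / ln 2"
proof -
  have pos: "\<And>S. 0 < atom_prob p S \<omega>" using atom_prob_pos[OF assms] by auto
  have "self_info p (A \<union> B) \<omega> + self_info p (A \<inter> B) \<omega>
      = self_info p A \<omega> + self_info p B \<omega> + log 2 (info_ratio p A B \<omega>)"
    unfolding self_info_def info_ratio_def
    using pos[of A] pos[of B] pos[of "A \<union> B"] pos[of "A \<inter> B"] by (simp add: log_mult log_divide)
  moreover have "ln (info_ratio p A B \<omega>) \<le> info_ratio p A B \<omega> - 1"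
    using info_ratio_pos[OF assms] by (rule ln_le_minus_one)
  then have "log 2 (info_ratio p A B \<omega>) \<le> (info_ratio p A B \<omega> - 1) / ln 2"
    unfolding log_def by (simp add: divide_right_mono)
  ultimately show ?thesis by linarith
qed

lemma entropy_marg_Un_finite:
  assumes "entropy_pmf (marg p A) < \<infinity>" "entropy_pmf (marg p B) < \<infinity>"
  shows "entropy_pmf (marg p (A \<union> B)) < \<infinity>"
proof -
  have "(\<integral>\<^sup>+\<omega>. ennreal (self_info p (A \<union> B) \<omega>) \<partial>p) \<le>
     (\<integral>\<^sup>+\<omega>. ennreal (self_info p A \<omega>) + ennreal (self_info p B \<omega>)
        + ennreal (info_ratio p A B \<omega>) * ennreal (1 / ln 2) \<partial>p)"
  proof (intro nn_integral_mono_AE, unfold AE_measure_pmf_iff, intro ballI)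
    fix \<omega> assume \<omega>: "\<omega> \<in> set_pmf p"
    have "(info_ratio p A B \<omega> - 1) / ln 2 \<le> info_ratio p A B \<omega> * (1 / ln 2)"
      by (simp add: divide_right_mono)
    then have "self_info p (A \<union> B) \<omega>
        \<le> self_info p A \<omega> + self_info p B \<omega> + info_ratio p A B \<omega> * (1 / ln 2)"
      using self_info_Un_Int_le[OF \<omega>, of A B] self_info_nonneg[OF \<omega>, of "A \<inter> B"] by linarith
    then show "ennreal (self_info p (A \<union> B) \<omega>) \<le> ennreal (self_info p A \<omega>)
        + ennreal (self_info p B \<omega>) + ennreal (info_ratio p A B \<omega>) * ennreal (1 / ln 2)"
      using self_info_nonneg[OF \<omega>] info_ratio_pos[OF \<omega>, of A B]
      by (simp add: ennreal_plus[symmetric] ennreal_mult[symmetric] ennreal_leI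
          del: ennreal_plus times_divide_eq_right)
  qed
  also have "\<dots> < \<infinity>"
    using assms le_less_trans[OF nn_integral_info_ratio_le_1[of p A B]]
    by (simp add: nn_integral_add nn_integral_multc entropy_marg_eq_nn_integral ennreal_mult_less_top)
  finally show ?thesis
    unfolding entropy_marg_eq_nn_integral .
qed

lemma entropy_marg_finite:
  assumes "admissible n p" "S \<subseteq> {1..n}"
  shows "entropy_pmf (marg p S) < \<infinity>"
proof -
  have "finite S" using assms(2) finite_subset by blast
  then show ?thesis using assms(2)
  proof (induction S rule: finite_induct)
    case empty
    then show ?case by (simp add: entropy_marg_empty)
  next
    case (insert i S)
    then have "entropy_pmf (marg p {i}) < \<infinity>" "entropy_pmf (marg p S) < \<infinity>"
      using assms(1) unfolding admissible_def by auto
    then show ?case using entropy_marg_Un_finite[of p "{i}" S] by simp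
  qed
qed

lemma H_mono: "A \<subseteq> B \<Longrightarrow> entropy_pmf (marg p B) < \<infinity> \<Longrightarrow> H p A \<le> H p B"
  unfolding H_def by (intro enn2real_mono entropy_marg_mono) auto

lemma H_submodular:
  assumes A: "entropy_pmf (marg p A) < \<infinity>" and B: "entropy_pmf (marg p B) < \<infinity>"
  shows "H p (A \<union> B) + H p (A \<inter> B) \<le> H p A + H p B"
proof -
  have AB: "entropy_pmf (marg p (A \<union> B)) < \<infinity>" "entropy_pmf (marg p (A \<inter> B)) < \<infinity>"
    using entropy_marg_Un_finite[OF A B] entropy_marg_mono[of "A \<inter> B" A p] A
    by (auto simp: le_less_trans)
  have ratio: "integrable (measure_pmf p) (info_ratio p A B)" "(\<integral>\<omega>. info_ratio p A B \<omega> \<partial>p) \<le> 1"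
    using nn_integral_info_ratio_le_1[of p A B] info_ratio_pos[of _ p A B]
    by (auto simp: AE_measure_pmf_iff less_imp_le integral_eq_nn_integral
        intro!: integrableI_nonneg le_less_trans[OF nn_integral_info_ratio_le_1]
        enn2real_leI)
  note integrable = integrable_self_info[OF A] integrable_self_info[OF B]
    integrable_self_info[OF AB(1)] integrable_self_info[OF AB(2)]
  have "H p (A \<union> B) + H p (A \<inter> B) = (\<integral>\<omega>. self_info p (A \<union> B) \<omega> + self_info p (A \<inter> B) \<omega> \<partial>p)"
    using integrable by (simp add: H_eq_integral)
  also have "\<dots> \<le> (\<integral>\<omega>. self_info p A \<omega> + self_info p B \<omega> + (info_ratio p A B \<omega> - 1) / ln 2 \<partial>p)"
    using integrable ratio self_info_Un_Int_le[of _ p A B]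
    by (intro integral_mono_AE) (auto simp: AE_measure_pmf_iff)
  also have "\<dots> = H p A + H p B + ((\<integral>\<omega>. info_ratio p A B \<omega> \<partial>p) - 1) / ln 2"
    using integrable ratio by (simp add: H_eq_integral diff_divide_distrib)
  also have "\<dots> \<le> H p A + H p B"
    using ratio by (simp add: divide_nonpos_pos)
  finally show ?thesis .
qed

section \<open>Multivariate information of a monotone submodular function\<close>

definition mono_submod_on :: "'a set \<Rightarrow> ('a set \<Rightarrow> real) \<Rightarrow> bool" where
  "mono_submod_on V f \<longleftrightarrow> (\<forall>A B. A \<subseteq> B \<longrightarrow> B \<subseteq> V \<longrightarrow> f A \<le> f B) \<and>
     (\<forall>A B. A \<subseteq> V \<longrightarrow> B \<subseteq> V \<longrightarrow> f (A \<union> B) + f (A \<inter> B) \<le> f A + f B)"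

lemma mono_submod_onD:
  assumes "mono_submod_on V f"
  shows mono_submod_on_mono: "A \<subseteq> B \<Longrightarrow> B \<subseteq> V \<Longrightarrow> f A \<le> f B"
    and mono_submod_on_submod: "A \<subseteq> V \<Longrightarrow> B \<subseteq> V \<Longrightarrow> f (A \<union> B) + f (A \<inter> B) \<le> f A + f B"
  using assms unfolding mono_submod_on_def by blast+

lemma mono_submod_on_H: "admissible n p \<Longrightarrow> mono_submod_on {1..n} (H p)"
  unfolding mono_submod_on_def using H_mono H_submodular entropy_marg_finite by blast

lemma mono_submod_on_Un_const:
  assumes "mono_submod_on V f" "C \<subseteq> V"
  shows "mono_submod_on V (\<lambda>A. f (A \<union> C))"
  unfolding mono_submod_on_def
proof (intro conjI allI impI)
  fix A B assume "A \<subseteq> B" "B \<subseteq> V"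
  then show "f (A \<union> C) \<le> f (B \<union> C)" using assms by (intro mono_submod_on_mono[OF assms(1)]) auto
next
  fix A B assume "A \<subseteq> V" "B \<subseteq> V"
  then have "f ((A \<union> C) \<union> (B \<union> C)) + f ((A \<union> C) \<inter> (B \<union> C)) \<le> f (A \<union> C) + f (B \<union> C)"
    using assms by (intro mono_submod_on_submod[OF assms(1)]) auto
  moreover have "(A \<union> C) \<union> (B \<union> C) = A \<union> B \<union> C" "(A \<union> C) \<inter> (B \<union> C) = A \<inter> B \<union> C" by auto
  ultimately show "f (A \<union> B \<union> C) + f (A \<inter> B \<union> C) \<le> f (A \<union> C) + f (B \<union> C)" by simp
qed

lemma mono_submod_on_null_Un:
  assumes "mono_submod_on V f" "I \<subseteq> V" "f I = f {}" "A \<subseteq> V"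
  shows "f (A \<union> I) = f A"
proof -
  have "f (A \<union> I) + f (A \<inter> I) \<le> f A + f I" "f {} \<le> f (A \<inter> I)" "f A \<le> f (A \<union> I)"
    using assms mono_submod_on_submod[OF assms(1,4,2)] by (auto intro!: mono_submod_on_mono[OF assms(1)])
  then show ?thesis using assms(3) by linarith
qed

lemma mono_submod_on_null_Diff:
  assumes "mono_submod_on V f" "I \<subseteq> V" "f I = f {}" "A \<subseteq> V"
  shows "f (A - I) = f A"
proof -
  have "f (A - I) \<le> f A" "f A \<le> f (A - I \<union> I)"
    using assms by (auto intro!: mono_submod_on_mono[OF assms(1)])
  moreover have "f (A - I \<union> I) = f (A - I)"
    using assms by (intro mono_submod_on_null_Un) auto
  ultimately show ?thesis by linarith
qed

definition multi_info :: "('a set \<Rightarrow> real) \<Rightarrow> 'a set multiset \<Rightarrow> real" where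
  "multi_info f M = (\<Sum>Q\<in>#M. f Q - f {}) - (f (\<Union>(set_mset M)) - f {})"

lemma valid_iff_multi_info: "valid p (C, M) \<longleftrightarrow> multi_info (\<lambda>A. H p (A \<union> C)) M = 0"
  unfolding valid_def condH_def multi_info_def by simp

lemma multi_info_empty [simp]: "multi_info f {#} = 0"
  and multi_info_single [simp]: "multi_info f {#A#} = 0"
  and multi_info_pair [simp]: "multi_info f {#A, A#} = f A - f {}"
  unfolding multi_info_def by simp_all

lemma multi_info_add_mset:
  "multi_info f (add_mset A M) =
     multi_info f M + (f A - f {}) + f (\<Union>(set_mset M)) - f (A \<union> \<Union>(set_mset M))"
  unfolding multi_info_def by simp

lemma multi_info_size_le_1: "size M \<le> 1 \<Longrightarrow> multi_info f M = 0"
  by (cases M) auto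

lemma multi_info_le_add_mset:
  assumes "mono_submod_on V f" "A \<subseteq> V" "\<forall>Q\<in>#M. Q \<subseteq> V"
  shows "multi_info f M \<le> multi_info f (add_mset A M)"
proof -
  let ?U = "\<Union>(set_mset M)"
  have "?U \<subseteq> V" using assms(3) by auto
  then have "f (A \<union> ?U) + f (A \<inter> ?U) \<le> f A + f ?U"
    by (rule mono_submod_on_submod[OF assms(1,2)])
  moreover have "f {} \<le> f (A \<inter> ?U)"
    using assms(2) by (intro mono_submod_on_mono[OF assms(1)]) auto
  ultimately show ?thesis unfolding multi_info_add_mset by linarith
qed

lemma multi_info_le_union:
  assumes "mono_submod_on V f" "\<forall>Q\<in>#M. Q \<subseteq> V" "\<forall>Q\<in>#N. Q \<subseteq> V"
  shows "multi_info f M \<le> multi_info f (M + N)"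
  using assms(3)
proof (induction N)
  case (add A N)
  then have "multi_info f (M + N) \<le> multi_info f (add_mset A (M + N))"
    using assms(2) by (intro multi_info_le_add_mset[OF assms(1)]) auto
  then show ?case using add by simp
qed simp

lemma multi_info_nonneg:
  "mono_submod_on V f \<Longrightarrow> \<forall>Q\<in>#M. Q \<subseteq> V \<Longrightarrow> 0 \<le> multi_info f M"
  using multi_info_le_union[of V f "{#}" M] by simp

lemma multi_info_add_mset_mono:
  assumes "mono_submod_on V f" "A' \<subseteq> A" "A \<subseteq> V" "\<forall>Q\<in>#M. Q \<subseteq> V"
  shows "multi_info f (add_mset A' M) \<le> multi_info f (add_mset A M)"
proof -
  define U where "U = \<Union>(set_mset M)"
  have "A' \<union> U \<subseteq> V" using assms unfolding U_def by auto
  then have "f (A \<union> U) + f (A \<inter> (A' \<union> U)) \<le> f A + f (A' \<union> U)"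
    using mono_submod_on_submod[OF assms(1,3), of "A' \<union> U"] assms(2)
    by (simp add: Un_assoc[symmetric] Un_absorb2)
  moreover have "f A' \<le> f (A \<inter> (A' \<union> U))"
    using mono_submod_on_mono[OF assms(1), of A' "A \<inter> (A' \<union> U)"] assms by blast
  ultimately show ?thesis
    unfolding multi_info_add_mset U_def[symmetric] by linarith
qed

lemma multi_info_image_mset_le:
  assumes "mono_submod_on V f" "\<forall>Q\<in>#M. g Q \<subseteq> Q \<and> Q \<subseteq> V" "\<forall>Q\<in>#N. Q \<subseteq> V"
  shows "multi_info f (image_mset g M + N) \<le> multi_info f (M + N)"
  using assms(2,3)
proof (induction M arbitrary: N)
  case (add A M)
  have "multi_info f (add_mset (g A) (image_mset g M + N)) \<le> multi_info f (add_mset A (image_mset g M + N))"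
    using add.prems by (intro multi_info_add_mset_mono[OF assms(1)]) force+
  also have "\<dots> \<le> multi_info f (M + add_mset A N)"
    using add.prems add.IH[of "add_mset A N"] by simp
  finally show ?case by simp
qed simp

lemma multi_info_filter_nonempty: "multi_info f (filter_mset (\<lambda>Q. Q \<noteq> {}) M) = multi_info f M"
proof (induction M)
  case (add A M)
  moreover have "\<Union>(set_mset (filter_mset (\<lambda>Q. Q \<noteq> {}) M)) = \<Union>(set_mset M)" by auto
  ultimately show ?case by (simp add: multi_info_add_mset)
qed simp

lemma multi_info_image_Diff_null:
  assumes "mono_submod_on V f" "I \<subseteq> V" "f I = f {}" "\<forall>Q\<in>#M. Q \<subseteq> V"
  shows "multi_info f (image_mset (\<lambda>Q. Q - I) M) = multi_info f M"
proof -
  have "image_mset (\<lambda>Q. f (Q - I) - f {}) M = image_mset (\<lambda>Q. f Q - f {}) M"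
    using assms by (intro image_mset_cong) (simp add: mono_submod_on_null_Diff)
  moreover have "\<Union>(set_mset (image_mset (\<lambda>Q. Q - I) M)) = \<Union>(set_mset M) - I" by auto
  moreover have "f (\<Union>(set_mset M) - I) = f (\<Union>(set_mset M))"
    using assms by (intro mono_submod_on_null_Diff) auto
  ultimately show ?thesis
    unfolding multi_info_def by (simp add: image_mset.compositionality comp_def)
qed

lemma II_obtain_two:
  assumes "x \<in> II M"
  obtains A B N where "M = add_mset A (add_mset B N)" "x \<in> A" "x \<in> B"
proof -
  define F where "F = filter_mset (\<lambda>Q. x \<in> Q) M"
  have size: "2 \<le> size F" using assms unfolding II_def F_def by simp
  then have "F \<noteq> {#}" by auto
  then obtain A F1 where F1: "F = add_mset A F1" by (metis multi_nonempty_split)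
  then have "F1 \<noteq> {#}" using size by auto
  then obtain B F2 where F2: "F1 = add_mset B F2" by (metis multi_nonempty_split)
  have "A \<in># F" "B \<in># F" using F1 F2 by auto
  then have "x \<in> A" "x \<in> B" unfolding F_def by auto
  moreover have "M = F + filter_mset (\<lambda>Q. x \<notin> Q) M"
    unfolding F_def by (rule multiset_partition)
  ultimately show ?thesis using F1 F2 that by auto
qed

lemma II_subset_Union: "II M \<subseteq> \<Union>(set_mset M)"
  by (auto elim!: II_obtain_two)

lemma multi_info_ge_II:
  assumes "mono_submod_on V f" "\<forall>Q\<in>#M. Q \<subseteq> V" "x \<in> II M"
  shows "f {x} - f {} \<le> multi_info f M"
proof -
  obtain A B N where M: "M = add_mset A (add_mset B N)" and x: "x \<in> A" "x \<in> B"
    using II_obtain_two[OF assms(3)] by blast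
  have AB: "\<forall>Q\<in>#{#A, B#}. Q \<subseteq> V" using assms(2) M by auto
  have "f {x} - f {} = multi_info f (image_mset (\<lambda>_. {x}) {#A, B#} + {#})" by simp
  also have "\<dots> \<le> multi_info f {#A, B#}"
    using multi_info_image_mset_le[OF assms(1), of "{#A, B#}" "\<lambda>_. {x}" "{#}"] AB x by simp
  also have "\<dots> \<le> multi_info f M"
    using multi_info_le_union[OF assms(1) AB, of N] assms(2) M by (simp add: add_mset_commute)
  finally show ?thesis .
qed

lemma II_null:
  assumes "mono_submod_on V f" "finite V" "\<forall>Q\<in>#M. Q \<subseteq> V" "multi_info f M = 0"
  shows "f (II M) = f {}"
proof -
  have IV: "II M \<subseteq> V" using II_subset_Union[of M] assms(3) by auto
  have bound: "f S \<le> f {}" if "finite S" "S \<subseteq> II M" for S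
    using that
  proof (induction S rule: finite_induct)
    case (insert x S)
    have xV: "{x} \<subseteq> V" "S \<subseteq> V" using insert.prems IV by auto
    have "f ({x} \<union> S) + f ({x} \<inter> S) \<le> f {x} + f S"
      by (rule mono_submod_on_submod[OF assms(1) xV])
    moreover have "f {} \<le> f ({x} \<inter> S)"
      using xV by (intro mono_submod_on_mono[OF assms(1)]) auto
    moreover have "f {x} \<le> f {}"
      using multi_info_ge_II[OF assms(1,3)] assms(4) insert.prems by fastforce
    ultimately show ?case using insert by simp
  qed simp
  have "f (II M) \<le> f {}"
    using bound IV finite_subset[OF IV assms(2)] by blast
  moreover have "f {} \<le> f (II M)"
    using IV by (intro mono_submod_on_mono[OF assms(1)]) auto
  ultimately show ?thesis by simp
qed

section \<open>Validity is decided by the canonical form\<close>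

definition can_parts :: "nat set multiset \<Rightarrow> nat set multiset" where
  "can_parts M = filter_mset (\<lambda>P. P \<noteq> {}) (image_mset (\<lambda>Q. Q - II M) M)"

lemma can_size_le_1: "size M \<le> 1 \<Longrightarrow> can (C, M) = None"
  unfolding can_def by simp

lemma can_size_ge_2:
  assumes "2 \<le> size M"
  shows "can (C, M) = Some (C,
    if II M \<noteq> {} \<and> size (can_parts M) \<le> 1 then {#II M, II M#}
    else if II M = {} then can_parts M
    else {#II M, II M#} + can_parts M)"
  using assms unfolding can_def can_parts_def Let_def by simp

lemma multi_info_eq_0_iff_II_null:
  assumes "mono_submod_on V f" "finite V" "\<forall>Q\<in>#M. Q \<subseteq> V"
  shows "multi_info f M = 0 \<longleftrightarrow> f (II M) = f {} \<and> multi_info f (can_parts M) = 0"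
proof -
  have "II M \<subseteq> V" using II_subset_Union[of M] assms(3) by auto
  then have "f (II M) = f {} \<Longrightarrow> multi_info f (can_parts M) = multi_info f M"
    using multi_info_image_Diff_null[OF assms(1) _ _ assms(3)]
    by (simp add: can_parts_def multi_info_filter_nonempty)
  then show ?thesis using II_null[OF assms] by auto
qed

lemma multi_info_II_pair_plus_eq_0_iff:
  assumes "mono_submod_on V f" "I \<subseteq> V" "\<forall>P\<in>#Ps. P \<subseteq> V"
  shows "multi_info f ({#I, I#} + Ps) = 0 \<longleftrightarrow> f I = f {} \<and> multi_info f Ps = 0"
proof -
  define U where "U = \<Union>(set_mset Ps)"
  have UV: "U \<subseteq> V" using assms(3) unfolding U_def by auto
  have sum: "multi_info f ({#I, I#} + Ps) = multi_info f (add_mset I Ps) + (f I - f {})"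
    using multi_info_add_mset[of f I "add_mset I Ps"] by (simp add: Un_assoc[symmetric])
  have "multi_info f Ps \<le> multi_info f (add_mset I Ps)"
    by (rule multi_info_le_add_mset[OF assms])
  moreover have "f {} \<le> f I"
    using assms(2) by (intro mono_submod_on_mono[OF assms(1)]) auto
  moreover have "0 \<le> multi_info f Ps"
    by (rule multi_info_nonneg[OF assms(1,3)])
  moreover have "f I = f {} \<Longrightarrow> multi_info f (add_mset I Ps) = multi_info f Ps"
    using mono_submod_on_null_Un[OF assms(1,2) _ UV]
    unfolding multi_info_add_mset U_def[symmetric] by (simp add: Un_commute)
  ultimately show ?thesis using sum by linarith
qed

lemma multi_info_eq_0_iff_can:
  assumes "mono_submod_on V f" "finite V" "\<forall>Q\<in>#M. Q \<subseteq> V"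
  shows "multi_info f M = 0 \<longleftrightarrow> (\<forall>K. can (C, M) = Some K \<longrightarrow> multi_info f (snd K) = 0)"
proof (cases "size M \<le> 1")
  case True
  then show ?thesis by (simp add: can_size_le_1 multi_info_size_le_1)
next
  case False
  have IV: "II M \<subseteq> V" using II_subset_Union[of M] assms(3) by auto
  have PV: "\<forall>P\<in>#can_parts M. P \<subseteq> V" using assms(3) unfolding can_parts_def by auto
  have "multi_info f M = 0 \<longleftrightarrow> f (II M) = f {} \<and> multi_info f (can_parts M) = 0"
    by (rule multi_info_eq_0_iff_II_null[OF assms])
  also have "\<dots> \<longleftrightarrow> (if II M \<noteq> {} \<and> size (can_parts M) \<le> 1 then multi_info f {#II M, II M#} = 0
      else if II M = {} then multi_info f (can_parts M) = 0
      else multi_info f ({#II M, II M#} + can_parts M) = 0)"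
    using multi_info_II_pair_plus_eq_0_iff[OF assms(1) IV PV] by (auto simp: multi_info_size_le_1)
  finally show ?thesis
    using False by (simp add: can_size_ge_2)
qed

lemma valid_pur: "valid p (pur K) \<longleftrightarrow> valid p K"
proof -
  obtain C M where K: "K = (C, M)" by fastforce
  define f where "f = (\<lambda>A. H p (A \<union> C))"
  have "image_mset (\<lambda>Q. f (Q - C) - f {}) M = image_mset (\<lambda>Q. f Q - f {}) M"
    unfolding f_def by (intro image_mset_cong) (simp add: Un_Diff_cancel2)
  moreover have "\<Union>(set_mset (image_mset (\<lambda>Q. Q - C) M)) = \<Union>(set_mset M) - C" by auto
  moreover have "f (\<Union>(set_mset M) - C) = f (\<Union>(set_mset M))" unfolding f_def by (simp add: Un_Diff_cancel2)
  ultimately have "multi_info f (image_mset (\<lambda>Q. Q - C) M) = multi_info f M"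
    unfolding multi_info_def by (simp add: image_mset.compositionality comp_def)
  then show ?thesis
    unfolding K pur_def by (simp add: valid_iff_multi_info multi_info_filter_nonempty f_def)
qed

lemma can_fst: "can (C, M) = Some K \<Longrightarrow> fst K = C"
  unfolding can_def Let_def by (auto split: if_splits)

lemma valid_iff_can_pur:
  assumes "is_cmi n K" "admissible n p"
  shows "valid p K \<longleftrightarrow> (\<forall>K'. can (pur K) = Some K' \<longrightarrow> valid p K')"
proof -
  obtain C M where pur: "pur K = (C, M)" by fastforce
  have C: "C \<subseteq> {1..n}" and M: "\<forall>Q\<in>#M. Q \<subseteq> {1..n}"
    using assms(1) pur unfolding is_cmi_def pur_def by force+
  have "multi_info (\<lambda>A. H p (A \<union> C)) M = 0 \<longleftrightarrow>
      (\<forall>K'. can (C, M) = Some K' \<longrightarrow> multi_info (\<lambda>A. H p (A \<union> C)) (snd K') = 0)"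
    using mono_submod_on_Un_const[OF mono_submod_on_H[OF assms(2)] C] M
    by (intro multi_info_eq_0_iff_can) auto
  moreover have "can (C, M) = Some K' \<Longrightarrow> K' = (C, snd K')" for K'
    using can_fst by (metis prod.collapse)
  ultimately show ?thesis
    using valid_pur[of p K] unfolding pur by (metis valid_iff_multi_info)
qed

section \<open>Uniqueness of canonical forms\<close>

definition meet_count :: "'a set multiset \<Rightarrow> 'a set \<Rightarrow> nat" where
  "meet_count M D = size (filter_mset (\<lambda>Q. Q \<inter> D \<noteq> {}) M)"

definition block_form :: "'a set \<Rightarrow> 'a set set \<Rightarrow> 'a set multiset \<Rightarrow> bool" where
  "block_form I PP M \<longleftrightarrow> finite PP \<and> (\<forall>P\<in>PP. P \<noteq> {} \<and> P \<inter> I = {}) \<and> disjoint PP \<and>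
     (if I = {} then 2 \<le> card PP \<and> M = mset_set PP
      else card PP \<noteq> 1 \<and> M = {#I, I#} + mset_set PP)"

lemma block_formD:
  assumes "block_form I PP M"
  shows block_form_finite: "finite PP"
    and block_form_nonempty: "P \<in> PP \<Longrightarrow> P \<noteq> {}"
    and block_form_disjoint_II: "P \<in> PP \<Longrightarrow> P \<inter> I = {}"
    and block_form_disjoint: "P \<in> PP \<Longrightarrow> P' \<in> PP \<Longrightarrow> P \<noteq> P' \<Longrightarrow> P \<inter> P' = {}"
    and block_form_mset: "M = (if I = {} then mset_set PP else {#I, I#} + mset_set PP)"
  using assms unfolding block_form_def by (auto simp: disjoint_def split: if_splits)

lemma block_form_two_blocks:
  assumes "block_form I PP M" "P \<in> PP"
  obtains P' where "P' \<in> PP" "P' \<noteq> P"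
proof -
  have "card PP \<noteq> 1" "card PP \<noteq> 0"
    using assms block_form_finite[OF assms(1)] unfolding block_form_def by (auto split: if_splits)
  moreover have "PP \<subseteq> {P} \<Longrightarrow> card PP \<le> 1"
    using card_mono[of "{P}" PP] by simp
  ultimately have "\<not> PP \<subseteq> {P}" by linarith
  then show ?thesis using that by blast
qed

lemma block_form_size: "block_form I PP M \<Longrightarrow> 2 \<le> size M"
  unfolding block_form_def by (auto split: if_splits)

lemma meet_count_block_form:
  assumes "block_form I PP M"
  shows "meet_count M D = (if I \<inter> D \<noteq> {} then 2 else 0) + card {P\<in>PP. P \<inter> D \<noteq> {}}"
  using block_form_finite[OF assms] block_form_mset[OF assms] unfolding meet_count_def
  by (cases "I = {}") (simp_all add: filter_mset_mset_set)

lemma meet_count_le_1_iff_block_form: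
  assumes "block_form I PP M"
  shows "meet_count M D \<le> 1 \<longleftrightarrow> I \<inter> D = {} \<and> (\<forall>P\<in>PP. \<forall>P'\<in>PP. P \<inter> D \<noteq> {} \<longrightarrow> P' \<inter> D \<noteq> {} \<longrightarrow> P = P')"
  unfolding meet_count_block_form[OF assms]
  using block_form_finite[OF assms] by (simp add: card_le_Suc0_iff_eq) blast

lemma block_form_II_iff: "block_form I PP M \<Longrightarrow> x \<in> I \<longleftrightarrow> \<not> meet_count M {x} \<le> 1"
  unfolding meet_count_le_1_iff_block_form by (auto dest: block_form_disjoint)

lemma block_form_pair_iff:
  assumes "block_form I PP M" "x \<notin> I" "y \<notin> I"
  shows "meet_count M {x, y} \<le> 1 \<longleftrightarrow> (\<forall>P\<in>PP. \<forall>P'\<in>PP. x \<in> P \<longrightarrow> y \<in> P' \<longrightarrow> P = P')"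
    (is "_ \<longleftrightarrow> ?same")
proof -
  have "(\<forall>P\<in>PP. \<forall>P'\<in>PP. P \<inter> {x, y} \<noteq> {} \<longrightarrow> P' \<inter> {x, y} \<noteq> {} \<longrightarrow> P = P') \<longleftrightarrow> ?same"
  proof (intro iffI ballI impI)
    fix P P' assume "?same" "P \<in> PP" "P' \<in> PP" "P \<inter> {x, y} \<noteq> {}" "P' \<inter> {x, y} \<noteq> {}"
    then show "P = P'"
      using block_form_disjoint[OF assms(1), of P P'] by auto
  qed auto
  then show ?thesis
    unfolding meet_count_le_1_iff_block_form[OF assms(1)] using assms(2,3) by simp
qed

lemma block_form_Union_subset:
  assumes "block_form I PP M" "block_form I PP' M'" "\<Union>PP \<subseteq> W"
    and tests: "\<And>D. D \<subseteq> W \<Longrightarrow> meet_count M D \<le> 1 \<longleftrightarrow> meet_count M' D \<le> 1"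
  shows "\<Union>PP \<subseteq> \<Union>PP'"
proof
  fix x assume "x \<in> \<Union>PP"
  then obtain P where P: "P \<in> PP" "x \<in> P" by blast
  obtain P2 where P2: "P2 \<in> PP" "P2 \<noteq> P" using block_form_two_blocks[OF assms(1) P(1)] by blast
  then obtain y where y: "y \<in> P2" using block_form_nonempty[OF assms(1)] by blast
  have notI: "x \<notin> I" "y \<notin> I"
    using block_form_disjoint_II[OF assms(1)] P P2 y by blast+
  have "\<not> meet_count M {x, y} \<le> 1"
    unfolding block_form_pair_iff[OF assms(1) notI] using P P2 y by blast
  moreover have "{x, y} \<subseteq> W" using assms(3) P P2 y by blast
  ultimately have "\<not> meet_count M' {x, y} \<le> 1"
    using tests by blast
  then show "x \<in> \<Union>PP'"
    unfolding block_form_pair_iff[OF assms(2) notI] by blast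
qed

lemma block_form_block_subset:
  assumes "block_form I PP M" "block_form I PP' M'" "\<Union>PP \<subseteq> \<Union>PP'" "\<Union>PP \<subseteq> W"
    and tests: "\<And>D. D \<subseteq> W \<Longrightarrow> meet_count M D \<le> 1 \<longleftrightarrow> meet_count M' D \<le> 1"
    and P: "P \<in> PP" "x \<in> P" and P': "P' \<in> PP'" "x \<in> P'"
  shows "P \<subseteq> P'"
proof
  fix z assume z: "z \<in> P"
  then obtain Q' where Q': "Q' \<in> PP'" "z \<in> Q'" using assms(3) P by blast
  have notI: "x \<notin> I" "z \<notin> I" using block_form_disjoint_II[OF assms(1) P(1)] P(2) z by blast+
  have "meet_count M {x, z} \<le> 1"
    unfolding block_form_pair_iff[OF assms(1) notI] using block_form_disjoint[OF assms(1)] P z by blast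
  moreover have "{x, z} \<subseteq> W" using assms(4) P z by blast
  ultimately have "meet_count M' {x, z} \<le> 1" using tests by blast
  then have "P' = Q'" unfolding block_form_pair_iff[OF assms(2) notI] using P' Q' by blast
  then show "z \<in> P'" using Q' by simp
qed

lemma block_form_blocks_subset:
  assumes "block_form I PP M" "block_form I PP' M'" "\<Union>PP = \<Union>PP'" "\<Union>PP \<subseteq> W"
    and tests: "\<And>D. D \<subseteq> W \<Longrightarrow> meet_count M D \<le> 1 \<longleftrightarrow> meet_count M' D \<le> 1"
  shows "PP \<subseteq> PP'"
proof
  fix P assume P: "P \<in> PP"
  then obtain x where x: "x \<in> P" using block_form_nonempty[OF assms(1)] by blast
  then obtain P' where P': "P' \<in> PP'" "x \<in> P'" using assms(3) P by blast
  have tests': "\<And>D. D \<subseteq> W \<Longrightarrow> meet_count M' D \<le> 1 \<longleftrightarrow> meet_count M D \<le> 1"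
    using tests by simp
  have "P \<subseteq> P'"
    using assms(3) by (intro block_form_block_subset[OF assms(1,2) _ assms(4) tests P x P']) simp
  moreover have "P' \<subseteq> P"
    using assms(3,4) by (intro block_form_block_subset[OF assms(2,1) _ _ tests' P' P x]) simp_all
  ultimately show "P \<in> PP'" using P' by simp
qed

lemma block_form_unique:
  assumes "block_form I PP M" "block_form I' PP' M'"
    and W: "I \<union> \<Union>PP \<subseteq> W" "I' \<union> \<Union>PP' \<subseteq> W"
    and tests: "\<And>D. D \<subseteq> W \<Longrightarrow> meet_count M D \<le> 1 \<longleftrightarrow> meet_count M' D \<le> 1"
  shows "M = M'"
proof -
  have tests': "\<And>D. D \<subseteq> W \<Longrightarrow> meet_count M' D \<le> 1 \<longleftrightarrow> meet_count M D \<le> 1"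
    using tests by simp
  have "x \<in> I \<longleftrightarrow> x \<in> I'" for x
  proof (cases "x \<in> W")
    case True
    then show ?thesis
      using tests[of "{x}"] block_form_II_iff[OF assms(1)] block_form_II_iff[OF assms(2)] by simp
  qed (use W in blast)
  then have I: "I' = I" by blast
  have B: "block_form I PP' M'" using assms(2) unfolding I .
  have WP: "\<Union>PP \<subseteq> W" "\<Union>PP' \<subseteq> W" using W by auto
  have U: "\<Union>PP = \<Union>PP'"
    using block_form_Union_subset[OF assms(1) B WP(1) tests]
      block_form_Union_subset[OF B assms(1) WP(2) tests'] by (rule subset_antisym)
  have "PP = PP'"
    using block_form_blocks_subset[OF assms(1) B U WP(1) tests]
      block_form_blocks_subset[OF B assms(1) U[symmetric] WP(2) tests'] by (rule subset_antisym)
  then show ?thesis using block_form_mset[OF assms(1)] block_form_mset[OF assms(2)] I by simp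
qed

definition is_pure :: "'a set \<Rightarrow> 'a set multiset \<Rightarrow> bool" where
  "is_pure C M \<longleftrightarrow> (\<forall>Q\<in>#M. Q \<noteq> {} \<and> Q \<inter> C = {})"

lemma is_pure_pur: "is_pure (fst (pur K)) (snd (pur K))"
  unfolding pur_def is_pure_def by force

lemma size_filter_mem_can_parts:
  assumes "x \<notin> II M"
  shows "size (filter_mset (\<lambda>P. x \<in> P) (can_parts M)) \<le> 1"
proof -
  have "filter_mset (\<lambda>P. x \<in> P) (can_parts M)
      = image_mset (\<lambda>Q. Q - II M) (filter_mset (\<lambda>Q. x \<in> Q) M)"
    unfolding can_parts_def filter_filter_mset filter_mset_image_mset
    using assms by (auto intro!: arg_cong[where f = "image_mset _"] filter_mset_cong)
  then show ?thesis using assms unfolding II_def by simp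
qed

lemma can_parts_block_set:
  shows "P \<in># can_parts M \<Longrightarrow> P \<noteq> {} \<and> P \<inter> II M = {}"
    and "disjoint (set_mset (can_parts M))"
    and "mset_set (set_mset (can_parts M)) = can_parts M"
proof -
  show "P \<in># can_parts M \<Longrightarrow> P \<noteq> {} \<and> P \<inter> II M = {}" for P
    unfolding can_parts_def by auto
  show "disjoint (set_mset (can_parts M))"
  proof (rule disjointI)
    fix P P' assume P: "P \<in># can_parts M" "P' \<in># can_parts M" "P \<noteq> P'"
    show "P \<inter> P' = {}"
    proof (rule ccontr)
      assume "P \<inter> P' \<noteq> {}"
      then obtain x where x: "x \<in> P" "x \<in> P'" by blast
      define F where "F = filter_mset (\<lambda>P. x \<in> P) (can_parts M)"
      have "P \<in># F" "P' \<in># F - {#P#}"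
        using P x unfolding F_def by (auto simp: in_diff_count)
      then have "2 \<le> size F"
        using size_Diff_singleton[of P F] by (cases "F - {#P#}") auto
      moreover have "x \<notin> II M" using P x unfolding can_parts_def by auto
      ultimately show False
        using size_filter_mem_can_parts[of x M] unfolding F_def by simp
    qed
  qed
  show "mset_set (set_mset (can_parts M)) = can_parts M"
  proof (rule multiset_eqI)
    fix P
    show "count (mset_set (set_mset (can_parts M))) P = count (can_parts M) P"
    proof (cases "P \<in># can_parts M")
      case True
      then obtain x where x: "x \<in> P" "x \<notin> II M" unfolding can_parts_def by auto
      have "count (can_parts M) P \<le> size (filter_mset (\<lambda>P. x \<in> P) (can_parts M))"
        using count_le_size[of "filter_mset (\<lambda>P. x \<in> P) (can_parts M)" P] x by simp
      moreover have "0 < count (can_parts M) P" using True by simp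
      ultimately have "count (can_parts M) P = 1"
        using size_filter_mem_can_parts[OF x(2)] by linarith
      then show ?thesis using True by simp
    qed (simp add: not_in_iff)
  qed
qed

definition good_form :: "cmi option \<Rightarrow> bool" where
  "good_form G \<longleftrightarrow> (\<forall>C M. G = Some (C, M) \<longrightarrow> is_pure C M \<and> (\<exists>I PP. block_form I PP M))"

lemma good_form_SomeI: "is_pure C M \<Longrightarrow> block_form I PP M \<Longrightarrow> good_form (Some (C, M))"
  unfolding good_form_def by blast

lemma good_form_can:
  assumes pure: "is_pure C M"
  shows "good_form (can (C, M))"
proof (cases "size M \<le> 1")
  case True
  then show ?thesis by (simp add: good_form_def can_size_le_1)
next
  case False
  define I where "I = II M"
  define Ps where "Ps = can_parts M"
  define PP where "PP = set_mset Ps"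
  have blocks: "finite PP" "\<forall>P\<in>PP. P \<noteq> {} \<and> P \<inter> I = {}" "disjoint PP" "mset_set PP = Ps"
    using can_parts_block_set(1)[of _ M] can_parts_block_set(2,3)[of M] unfolding I_def PP_def Ps_def by auto
  then have card: "card PP = size Ps" by (metis size_mset_set)
  have IC: "I \<inter> C = {}" using II_subset_Union[of M] pure unfolding I_def is_pure_def by blast
  have PsC: "\<forall>P\<in>#Ps. P \<noteq> {} \<and> P \<inter> C = {}"
    using pure unfolding Ps_def can_parts_def is_pure_def by auto
  have can: "can (C, M) = Some (C,
      if I \<noteq> {} \<and> size Ps \<le> 1 then {#I, I#} else if I = {} then Ps else {#I, I#} + Ps)"
    using False unfolding I_def Ps_def by (intro can_size_ge_2) simp
  consider "I \<noteq> {}" "size Ps \<le> 1" | "I = {}" | "I \<noteq> {}" "\<not> size Ps \<le> 1" by blast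
  then show ?thesis
  proof cases
    case 1
    have "is_pure C {#I, I#}" "block_form I {} {#I, I#}"
      using 1 IC unfolding is_pure_def block_form_def by simp_all
    then show ?thesis using 1 by (simp add: can good_form_SomeI)
  next
    case 2
    have "Ps = filter_mset (\<lambda>P. P \<noteq> {}) M"
      using 2 unfolding Ps_def can_parts_def I_def by simp
    also have "\<dots> = filter_mset (\<lambda>_. True) M"
      using pure unfolding is_pure_def by (intro filter_mset_cong0) blast
    finally have "Ps = M" by simp
    then have "is_pure C Ps" "block_form I PP Ps"
      using blocks card False PsC 2 unfolding is_pure_def block_form_def by auto
    then show ?thesis using 2 by (simp add: can good_form_SomeI)
  next
    case 3
    have "is_pure C ({#I, I#} + Ps)" "block_form I PP ({#I, I#} + Ps)"
      using 3 blocks card IC PsC unfolding is_pure_def block_form_def by auto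
    then show ?thesis using 3 by (simp add: can good_form_SomeI)
  qed
qed

lemma good_form_can_pur: "good_form (can (pur K))"
  using good_form_can[OF is_pure_pur[of K]] by simp

lemma block_form_subset_compl:
  assumes "block_form I PP M" "is_pure C M"
  shows "I \<union> \<Union>PP \<subseteq> - C"
proof -
  have "P \<in># M" if "P \<in> PP" for P
    using that block_form_mset[OF assms(1)] block_form_finite[OF assms(1)] by (cases "I = {}") simp_all
  moreover have "I \<noteq> {} \<Longrightarrow> I \<in># M"
    using block_form_mset[OF assms(1)] by simp
  ultimately show ?thesis using assms(2) unfolding is_pure_def by blast
qed

definition meet_test :: "cmi option \<Rightarrow> nat set \<Rightarrow> bool" where
  "meet_test G D \<longleftrightarrow> (\<forall>C M. G = Some (C, M) \<longrightarrow> C \<inter> D \<noteq> {} \<or> meet_count M D \<le> 1)"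

lemma meet_test_Some: "meet_test (Some (C, M)) D \<longleftrightarrow> C \<inter> D \<noteq> {} \<or> meet_count M D \<le> 1"
  unfolding meet_test_def by simp

lemma meet_test_compl:
  assumes "good_form (Some (C, M))"
  shows "\<not> meet_test (Some (C, M)) (- C)"
proof -
  obtain I PP where "is_pure C M" "block_form I PP M" using assms unfolding good_form_def by blast
  have "filter_mset (\<lambda>Q. Q \<inter> - C \<noteq> {}) M = filter_mset (\<lambda>_. True) M"
    using \<open>is_pure C M\<close> unfolding is_pure_def by (intro filter_mset_cong0) blast
  then have "meet_count M (- C) = size M"
    unfolding meet_count_def by simp
  then show ?thesis
    using block_form_size[OF \<open>block_form I PP M\<close>] by (simp add: meet_test_Some)
qed

lemma good_form_fst_eq:
  assumes "good_form (Some (C, M))"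
  shows "C = {x. \<forall>D. x \<in> D \<longrightarrow> meet_test (Some (C, M)) D}"
  using meet_test_compl[OF assms] unfolding meet_test_def by blast

lemma good_form_eq_None_iff:
  assumes "good_form G"
  shows "G = None \<longleftrightarrow> (\<forall>D. meet_test G D)"
proof (cases G)
  case (Some K)
  then obtain C M where G: "G = Some (C, M)" by (cases K) auto
  then have "\<not> meet_test G (- C)" using meet_test_compl[of C M] assms by simp
  then show ?thesis using G by auto
qed (simp add: meet_test_def)

lemma good_form_unique:
  assumes good: "good_form G" "good_form G'" and tests: "\<And>D. meet_test G D \<longleftrightarrow> meet_test G' D"
  shows "G = G'"
proof (cases "G = None")
  case True
  then have "G' = None"
    unfolding good_form_eq_None_iff[OF good(1)] good_form_eq_None_iff[OF good(2)] tests .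
  then show ?thesis using True by simp
next
  case False
  then have "G' \<noteq> None"
    unfolding good_form_eq_None_iff[OF good(1)] good_form_eq_None_iff[OF good(2)] tests .
  then obtain C M C' M' where G: "G = Some (C, M)" and G': "G' = Some (C', M')"
    using False by (metis not_None_eq surj_pair)
  have "C = {x. \<forall>D. x \<in> D \<longrightarrow> meet_test G D}" "C' = {x. \<forall>D. x \<in> D \<longrightarrow> meet_test G' D}"
    using good_form_fst_eq good unfolding G G' by simp_all
  then have C: "C' = C" unfolding tests by simp
  have "is_pure C M \<and> (\<exists>I PP. block_form I PP M)" "is_pure C M' \<and> (\<exists>I PP. block_form I PP M')"
    using good C unfolding G G' good_form_def by simp_all
  then obtain I PP I' PP' where B: "block_form I PP M" "block_form I' PP' M'"
    and pure: "is_pure C M" "is_pure C M'" by blast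
  have "meet_count M D \<le> 1 \<longleftrightarrow> meet_count M' D \<le> 1" if "D \<subseteq> - C" for D
  proof -
    have "C \<inter> D = {}" using that by blast
    then show ?thesis using tests[of D] C unfolding G G' meet_test_Some by simp
  qed
  then have "M = M'"
    using block_form_subset_compl[OF B(1) pure(1)] block_form_subset_compl[OF B(2) pure(2)]
    by (intro block_form_unique[OF B, of "- C"]) simp_all
  then show ?thesis using G G' C by simp
qed

section \<open>Separating distributions\<close>

definition coin_on :: "nat set \<Rightarrow> jdist" where
  "coin_on D = map_pmf (\<lambda>b i. if i \<in> D \<and> b then 1 else 0) (bernoulli_pmf (1/2))"

lemma entropy_pmf_map_inj: "inj f \<Longrightarrow> entropy_pmf (map_pmf f q) = entropy_pmf q"
  unfolding entropy_pmf_def by (simp add: pmf_map_inj')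

lemma entropy_pmf_marg_coin_on:
  "entropy_pmf (marg (coin_on D) A) = (if A \<inter> D \<noteq> {} then 1 else 0)"
proof -
  define g where "g = (\<lambda>b::bool. restrict (\<lambda>i::nat. if i \<in> D \<and> b then 1 else (0::nat)) A)"
  have marg: "marg (coin_on D) A = map_pmf g (bernoulli_pmf (1/2))"
    unfolding marg_def coin_on_def g_def by (simp add: map_pmf_comp)
  show ?thesis
  proof (cases "A \<inter> D \<noteq> {}")
    case True
    then obtain i where "i \<in> A" "i \<in> D" by blast
    then have "g b i = (if b then 1 else 0)" for b unfolding g_def by simp
    then have "inj g" by (intro injI) (metis zero_neq_one)
    moreover have "- log 2 (1 / 2 :: real) = 1" by (simp add: log_divide)
    then have "entropy_pmf (bernoulli_pmf (1 / 2)) = 1" unfolding entropy_pmf_def by simp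
    ultimately show ?thesis
      using True by (simp add: marg entropy_pmf_map_inj)
  next
    case False
    then have "g = (\<lambda>_. restrict (\<lambda>_. 0) A)" unfolding g_def by (auto simp: fun_eq_iff restrict_def)
    then show ?thesis using False by (simp add: marg entropy_pmf_def)
  qed
qed

lemma H_coin_on: "H (coin_on D) A = (if A \<inter> D \<noteq> {} then 1 else 0)"
  unfolding H_def entropy_pmf_marg_coin_on by simp

lemma admissible_coin_on: "admissible n (coin_on D)"
  unfolding admissible_def entropy_pmf_marg_coin_on by simp

lemma valid_coin_on_iff: "valid (coin_on D) (C, M) \<longleftrightarrow> C \<inter> D \<noteq> {} \<or> meet_count M D \<le> 1"
proof (cases "C \<inter> D = {}")
  case True
  then have H: "H (coin_on D) (A \<union> C) = (if A \<inter> D \<noteq> {} then 1 else 0)" for A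
    by (auto simp: H_coin_on)
  have "(\<Sum>Q\<in>#M. H (coin_on D) (Q \<union> C) - H (coin_on D) ({} \<union> C)) = real (meet_count M D)"
    unfolding H meet_count_def by (induction M) auto
  moreover have "\<Union>(set_mset M) \<inter> D \<noteq> {} \<longleftrightarrow> meet_count M D \<noteq> 0"
    unfolding meet_count_def by (auto simp: filter_mset_eq_mempty_iff)
  ultimately show ?thesis
    using True unfolding valid_iff_multi_info multi_info_def H by auto
next
  case False
  then have H: "H (coin_on D) (A \<union> C) = 1" for A
    by (auto simp: H_coin_on)
  moreover have "H (coin_on D) C = 1" using H[of "{}"] by simp
  ultimately show ?thesis
    using False unfolding valid_iff_multi_info multi_info_def by simp
qed

lemma meet_test_can_pur:
  "is_cmi n K \<Longrightarrow> meet_test (can (pur K)) D \<longleftrightarrow> valid (coin_on D) K"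
  unfolding valid_iff_can_pur[OF _ admissible_coin_on] meet_test_def
  by (auto simp: valid_coin_on_iff)

theorem mainTheorem2:
  fixes n :: nat and K K' :: cmi
  assumes "is_cmi n K" and "is_cmi n K'"
  shows "cmi_equiv n K K' \<longleftrightarrow> can (pur K) = can (pur K')"
proof
  assume "cmi_equiv n K K'"
  then have "meet_test (can (pur K)) D \<longleftrightarrow> meet_test (can (pur K')) D" for D
    using meet_test_can_pur[OF assms(1)] meet_test_can_pur[OF assms(2)] admissible_coin_on
    unfolding cmi_equiv_def by blast
  then show "can (pur K) = can (pur K')"
    by (intro good_form_unique good_form_can_pur)
next
  assume "can (pur K) = can (pur K')"
  then show "cmi_equiv n K K'"
    using valid_iff_can_pur[OF assms(1)] valid_iff_can_pur[OF assms(2)] unfolding cmi_equiv_def by simp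
qed

end
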